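(* Let $N\ge1$, $p\ge2$, $w,g\in L^1_{loc}(\mathbb{R}^N)$ positive a.e. with $g^{-1}\in L^\infty(\mathbb{R}^N)$. Let $M$ be a constant with $M>0$ if $p=2$ and $0<M<\frac{4}{(p-1)^2}$ if $p>2$. Let $u\in C^1(\mathbb{R}^N)$, $u>0$, with $\|u\|_{L^\infty(\mathbb{R}^N)}\le M$, be a stable weak solution of $\operatorname{div}(w|\nabla u|^{p-2}\nabla u)=g(x)e^{1/u}$ in $\mathbb{R}^N$. Then for every $\beta\in(0,t_p)$ there exists a constant $c>0$, depending on $\beta,p,M,m$ but not on $\psi$, such that for every $\psi\in C^1_c(\mathbb{R}^N)$ with $0\le\psi\le1$, $$\int_{\mathbb{R}^N} g\Big(\frac{\psi}{u}\Big)^{2\beta+p}dx\le c\int_{\mathbb{R}^N} w^{\theta'}|\nabla\psi|^{p\theta'}dx,\qquad \theta'=\frac{2\beta+p}{p}.$$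
   Context: Here $m=\|g^{-1}\|_{L^\infty}$. Weak solution and stability are with respect to $f(t)=-e^{1/t}$ and the equation $-\operatorname{div}(w|\nabla u|^{p-2}\nabla u)=gf(u)$: $u\in C^1$ is a weak solution if $\int w|\nabla u|^{p-2}\nabla u\cdot\nabla\varphi=\int gf(u)\varphi$ for all $\varphi\in C^1_c(\mathbb{R}^N)$; it is stable if for all $\varphi\in C^1_c(\mathbb{R}^N)$, $\int w|\nabla u|^{p-2}|\nabla\varphi|^2+(p-2)\int w|\nabla u|^{p-4}(\nabla u\cdot\nabla\varphi)^2-\int gf'(u)\varphi^2\ge0$ (middle integrand $=0$ where $\nabla u=0$). $t_p=\frac1M+\sqrt{\frac1M+\frac1{M^2}}$ if $p=2$, and $t_p=\frac{2}{M(p-1)}-\frac{p-1}{2}$ if $p>2$. *)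

theory Defs
  imports "HOL-Analysis.Analysis" "HOL-Probability.Essential_Supremum"
begin

definition fnl :: "real \<Rightarrow> real" where
  "fnl t = - exp (1 / t)"

text \<open>Power t^a for t \<ge> 0, a \<ge> 0, with the convention 0^0 = 1
  (Isabelle's powr has 0 powr 0 = 0).\<close>
definition rpow :: "real \<Rightarrow> real \<Rightarrow> real" where
  "rpow t a = (if t = 0 then (if a = 0 then 1 else 0) else t powr a)"

definition C1_grad :: "('a::euclidean_space \<Rightarrow> real) \<Rightarrow> ('a \<Rightarrow> 'a) \<Rightarrow> bool" where
  "C1_grad f Df \<longleftrightarrow> (\<forall>x. (f has_derivative (\<lambda>h. Df x \<bullet> h)) (at x)) \<and> continuous_on UNIV Df"

definition C1c_grad :: "('a::euclidean_space \<Rightarrow> real) \<Rightarrow> ('a \<Rightarrow> 'a) \<Rightarrow> bool" where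
  "C1c_grad f Df \<longleftrightarrow> C1_grad f Df \<and> compact (closure {x. f x \<noteq> 0})"

definition loc_integrable :: "('a::euclidean_space \<Rightarrow> real) \<Rightarrow> bool" where
  "loc_integrable f \<longleftrightarrow> (\<forall>K. compact K \<longrightarrow> set_integrable lebesgue K f)"

text \<open>Weak solution of -div(w |\<nabla>u|^{p-2} \<nabla>u) = g f(u), with Du the gradient of u.\<close>
definition weak_solution ::
  "real \<Rightarrow> ('a::euclidean_space \<Rightarrow> real) \<Rightarrow> ('a \<Rightarrow> real) \<Rightarrow> ('a \<Rightarrow> real) \<Rightarrow> ('a \<Rightarrow> 'a) \<Rightarrow> bool" where
  "weak_solution p w g u Du \<longleftrightarrow>
     (\<forall>\<phi> D\<phi>. C1c_grad \<phi> D\<phi> \<longrightarrow>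
        (\<integral>x. w x * rpow (norm (Du x)) (p - 2) * (Du x \<bullet> D\<phi> x) \<partial>lebesgue)
        = (\<integral>x. g x * fnl (u x) * \<phi> x \<partial>lebesgue))"

definition stable ::
  "real \<Rightarrow> ('a::euclidean_space \<Rightarrow> real) \<Rightarrow> ('a \<Rightarrow> real) \<Rightarrow> ('a \<Rightarrow> real) \<Rightarrow> ('a \<Rightarrow> 'a) \<Rightarrow> bool" where
  "stable p w g u Du \<longleftrightarrow>
     (\<forall>\<phi> D\<phi>. C1c_grad \<phi> D\<phi> \<longrightarrow>
        (\<integral>x. w x * rpow (norm (Du x)) (p - 2) * (norm (D\<phi> x))\<^sup>2 \<partial>lebesgue)
        + (p - 2) * (\<integral>x. (if Du x = 0 then 0
                         else w x * norm (Du x) powr (p - 4) * (Du x \<bullet> D\<phi> x)\<^sup>2) \<partial>lebesgue)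
        - (\<integral>x. g x * deriv fnl (u x) * (\<phi> x)\<^sup>2 \<partial>lebesgue) \<ge> 0)"

definition t_p :: "real \<Rightarrow> real \<Rightarrow> real" where
  "t_p p M = (if p = 2 then 1 / M + sqrt (1 / M + 1 / M\<^sup>2)
              else 2 / (M * (p - 1)) - (p - 1) / 2)"

end

theory Submission
  imports Defs
begin

text \<open>Write \<open>z = \<psi>/u\<close>, \<open>r = 2\<beta> + p\<close> and \<open>\<alpha> = \<beta> + (p - 2)/2\<close>, so that \<open>r = 2\<alpha> + 2\<close>. Testing the
  equation with \<open>u z^r\<close> and the stability inequality with \<open>u z^(\<alpha>+1)\<close>, whose gradients involve only
  \<open>\<nabla>u\<close> and \<open>\<nabla>\<psi>\<close>, gives two relations between the energy \<open>\<integral> w |\<nabla>u|^p z^r\<close>, the mixed term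
  \<open>\<integral> w |\<nabla>u|^(p-2) z^(r-1) \<nabla>u\<cdot>\<nabla>\<psi>\<close>, a cut-off term and \<open>\<integral> g e^(1/u) z^r\<close>. Eliminating the energy and
  using \<open>u \<le> M\<close> bounds \<open>(2\<alpha> + 1 - (p - 1)\<alpha>\<^sup>2M) \<integral> g e^(1/u) z^r\<close> by the mixed and cut-off terms, and
  \<open>\<beta> < t_p\<close> makes this coefficient positive. Young's inequality with a small parameter bounds those
  terms by a small multiple of the energy plus \<open>\<integral> w z^(2\<beta>) |\<nabla>\<psi>|^p\<close>; a weighted Young inequality,
  using \<open>1/g \<le> m\<close>, finally trades the latter for a small multiple of \<open>\<integral> g z^r\<close>, which is absorbed.\<close>

section \<open>Local integrability and \<open>C\<^sup>1\<close> calculus\<close>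

lemma continuous_on_imp_borel_measurable_lebesgue:
  fixes h :: "'a::euclidean_space \<Rightarrow> 'b::topological_space"
  shows "continuous_on UNIV h \<Longrightarrow> h \<in> borel_measurable lebesgue"
  by (simp add: borel_measurable_continuous_onI measurable_completion)

lemma loc_integrable_imp_borel_measurable:
  fixes w :: "'a::euclidean_space \<Rightarrow> real"
  assumes "loc_integrable w"
  shows "w \<in> borel_measurable lebesgue"
proof (rule borel_measurable_LIMSEQ_real)
  fix n :: nat
  have "integrable lebesgue (\<lambda>x. indicator (cball 0 (real n)) x *\<^sub>R w x)"
    using assms unfolding loc_integrable_def set_integrable_def by auto
  then show "(\<lambda>x. indicator (cball 0 (real n)) x *\<^sub>R w x) \<in> borel_measurable lebesgue"
    by (rule borel_measurable_integrable)
next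
  fix x :: 'a
  have "eventually (\<lambda>n. indicator (cball 0 (real n)) x *\<^sub>R w x = w x) sequentially"
    unfolding eventually_sequentially
    by (rule exI[of _ "nat \<lceil>norm x\<rceil>"])
      (auto simp: indicator_def dist_norm intro: order_trans[OF real_nat_ceiling_ge])
  then show "(\<lambda>n. indicator (cball 0 (real n)) x *\<^sub>R w x) \<longlonglongrightarrow> w x"
    by (rule tendsto_eventually)
qed

lemma loc_integrable_mult_compact_support:
  fixes w h :: "'a::euclidean_space \<Rightarrow> real"
  assumes w: "loc_integrable w" and S: "compact S" and h: "continuous_on UNIV h"
    and vanish: "\<And>x. x \<notin> S \<Longrightarrow> h x = 0"
  shows "integrable lebesgue (\<lambda>x. w x * h x)"
proof -
  let ?wS = "\<lambda>x. indicator S x *\<^sub>R w x"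
  have int_wS: "integrable lebesgue ?wS"
    using w S unfolding loc_integrable_def set_integrable_def by auto
  obtain B where B: "\<And>x. x \<in> S \<Longrightarrow> \<bar>h x\<bar> \<le> B"
    using compact_imp_bounded[OF compact_continuous_image[OF continuous_on_subset[OF h] S]]
    unfolding bounded_iff by auto
  have eq: "(\<lambda>x. w x * h x) = (\<lambda>x. ?wS x * h x)"
    using vanish by (force simp: indicator_def)
  have "integrable lebesgue (\<lambda>x. ?wS x * h x)"
  proof (rule Bochner_Integration.integrable_bound)
    show "integrable lebesgue (\<lambda>x. max B 0 * ?wS x)"
      using int_wS by simp
    show "(\<lambda>x. ?wS x * h x) \<in> borel_measurable lebesgue"
      using borel_measurable_integrable[OF int_wS] continuous_on_imp_borel_measurable_lebesgue[OF h]
      by measurable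
    show "AE x in lebesgue. norm (?wS x * h x) \<le> norm (max B 0 * ?wS x)"
    proof (rule AE_I2)
      fix x
      have "\<bar>w x\<bar> * \<bar>h x\<bar> \<le> \<bar>w x\<bar> * max B 0" if "x \<in> S"
        using B[OF that] by (intro mult_left_mono) auto
      then show "norm (?wS x * h x) \<le> norm (max B 0 * ?wS x)"
        by (cases "x \<in> S") (simp_all add: abs_mult ac_simps)
    qed
  qed
  then show ?thesis
    using eq by simp
qed

lemma C1_grad_continuous_on: "C1_grad f Df \<Longrightarrow> continuous_on UNIV f"
  unfolding C1_grad_def
  by (meson continuous_at_imp_continuous_on has_derivative_continuous)

lemma C1_grad_mult:
  assumes "C1_grad f Df" "C1_grad g Dg"
  shows "C1_grad (\<lambda>x. f x * g x) (\<lambda>x. f x *\<^sub>R Dg x + g x *\<^sub>R Df x)"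
  unfolding C1_grad_def
proof (intro conjI allI)
  fix x
  have "((\<lambda>x. f x * g x) has_derivative (\<lambda>h. f x * (Dg x \<bullet> h) + (Df x \<bullet> h) * g x)) (at x)"
    using assms unfolding C1_grad_def by (auto intro: has_derivative_mult)
  then show "((\<lambda>x. f x * g x) has_derivative (\<lambda>h. (f x *\<^sub>R Dg x + g x *\<^sub>R Df x) \<bullet> h)) (at x)"
    by (simp add: inner_add_left algebra_simps)
next
  show "continuous_on UNIV (\<lambda>x. f x *\<^sub>R Dg x + g x *\<^sub>R Df x)"
    using assms C1_grad_continuous_on[OF assms(1)] C1_grad_continuous_on[OF assms(2)]
    unfolding C1_grad_def by (intro continuous_intros) auto
qed

lemma C1_grad_divide:
  assumes "C1_grad f Df" "C1_grad g Dg" "\<And>x. g x > 0"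
  shows "C1_grad (\<lambda>x. f x / g x) (\<lambda>x. (1 / g x) *\<^sub>R Df x - (f x / (g x)\<^sup>2) *\<^sub>R Dg x)"
  unfolding C1_grad_def
proof (intro conjI allI)
  fix x
  have gx: "g x \<noteq> 0"
    using assms(3)[of x] by simp
  have "((\<lambda>x. f x / g x) has_derivative
      (\<lambda>h. - f x * (inverse (g x) * (Dg x \<bullet> h) * inverse (g x)) + (Df x \<bullet> h) / g x)) (at x)"
    using has_derivative_divide[of f "\<lambda>h. Df x \<bullet> h" x UNIV g "\<lambda>h. Dg x \<bullet> h"] assms gx
    unfolding C1_grad_def by blast
  then show "((\<lambda>x. f x / g x) has_derivative
      (\<lambda>h. ((1 / g x) *\<^sub>R Df x - (f x / (g x)\<^sup>2) *\<^sub>R Dg x) \<bullet> h)) (at x)"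
    using gx by (simp add: inner_diff_left field_simps power2_eq_square)
next
  have "\<forall>x. g x \<noteq> 0"
    using assms(3) by (metis less_irrefl)
  then show "continuous_on UNIV (\<lambda>x. (1 / g x) *\<^sub>R Df x - (f x / (g x)\<^sup>2) *\<^sub>R Dg x)"
    using assms C1_grad_continuous_on[OF assms(1)] C1_grad_continuous_on[OF assms(2)]
    unfolding C1_grad_def by (intro continuous_intros) auto
qed

text \<open>At a zero of \<open>f\<close> the chain rule is unavailable; but \<open>f\<close> has a minimum there, so \<open>Df\<close>
  vanishes and \<open>f y powr r \<le> f y = o(|y - x|)\<close>.\<close>
lemma has_derivative_powr_at_zero:
  fixes f :: "'a::euclidean_space \<Rightarrow> real"
  assumes df: "(f has_derivative (\<lambda>h. Df \<bullet> h)) (at x)" and nonneg: "\<And>y. f y \<ge> 0"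
    and fx0: "f x = 0" and r: "r > 1"
  shows "((\<lambda>y. f y powr r) has_derivative (\<lambda>h. 0)) (at x)"
proof -
  have "(\<lambda>h. Df \<bullet> h) = (\<lambda>h. 0)"
    by (rule has_derivative_local_min[OF df]) (simp add: fx0 nonneg)
  then have Df0: "Df = 0"
    by (metis inner_eq_zero_iff)
  have "((\<lambda>y. norm (f y - f x - Df \<bullet> (y - x)) / norm (y - x)) \<longlongrightarrow> 0) (at x)"
    using df unfolding has_derivative_iff_norm by auto
  then have f_small: "((\<lambda>y. f y / norm (y - x)) \<longlongrightarrow> 0) (at x)"
    using fx0 Df0 nonneg by simp
  have "eventually (\<lambda>y. dist (f y) (f x) < 1) (at x)"
    using has_derivative_continuous[OF df] unfolding isCont_def tendsto_iff by auto
  then have f_le_1: "eventually (\<lambda>y. f y \<le> 1) (at x)"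
    by eventually_elim (simp add: fx0 dist_real_def nonneg)
  have "((\<lambda>y. norm (f y powr r - f x powr r - 0) / norm (y - x)) \<longlongrightarrow> 0) (at x)"
  proof (rule tendsto_sandwich[OF _ _ tendsto_const f_small])
    show "eventually (\<lambda>y. norm (f y powr r - f x powr r - 0) / norm (y - x)
        \<le> f y / norm (y - x)) (at x)"
      using f_le_1
    proof eventually_elim
      case (elim y)
      have "f y powr r \<le> f y powr 1"
        using powr_mono'[of 1 r "f y"] r nonneg[of y] elim by simp
      also have "\<dots> = f y"
        using nonneg[of y] by simp
      finally show ?case
        using fx0 nonneg[of y] by (simp add: divide_right_mono)
    qed
  qed simp
  then show ?thesis
    unfolding has_derivative_iff_norm by simp
qed

lemma C1_grad_powr:
  assumes C: "C1_grad f Df" and nonneg: "\<And>x. f x \<ge> 0" and r: "r > 1"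
  shows "C1_grad (\<lambda>x. f x powr r) (\<lambda>x. (r * f x powr (r - 1)) *\<^sub>R Df x)"
  unfolding C1_grad_def
proof (intro conjI allI)
  fix x
  have dfx: "(f has_derivative (\<lambda>h. Df x \<bullet> h)) (at x)"
    using C unfolding C1_grad_def by auto
  show "((\<lambda>x. f x powr r) has_derivative (\<lambda>h. ((r * f x powr (r - 1)) *\<^sub>R Df x) \<bullet> h)) (at x)"
  proof (cases "f x > 0")
    case True
    have "((\<lambda>t. t powr r) has_derivative (\<lambda>h. r * f x powr (r - 1) * h)) (at (f x))"
      using has_real_derivative_powr[OF True, of r] unfolding has_field_derivative_def
      by (simp add: mult.commute[of _ "r * f x powr (r - 1)"])
    from has_derivative_compose[OF dfx this] show ?thesis
      by (simp add: mult.assoc)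
  next
    case False
    then have "f x = 0"
      using nonneg[of x] by simp
    with has_derivative_powr_at_zero[OF dfx nonneg _ r] show ?thesis
      by simp
  qed
next
  have "continuous_on UNIV (\<lambda>x. f x powr (r - 1))"
    using C1_grad_continuous_on[OF C] nonneg r
    by (intro continuous_on_powr') (auto intro: continuous_intros)
  then show "continuous_on UNIV (\<lambda>x. (r * f x powr (r - 1)) *\<^sub>R Df x)"
    using C unfolding C1_grad_def
    by (intro continuous_on_scaleR continuous_on_mult continuous_on_const) auto
qed

lemma compact_support_mono:
  fixes f g :: "'a::euclidean_space \<Rightarrow> real"
  assumes "compact (closure {x. f x \<noteq> 0})" "\<And>x. f x = 0 \<Longrightarrow> g x = 0"
  shows "compact (closure {x. g x \<noteq> 0})"
proof -
  have "bounded {x. g x \<noteq> 0}"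
    by (rule bounded_subset[of "{x. f x \<noteq> 0}"]) (use assms compact_closure in auto)
  then show ?thesis
    using compact_closure by blast
qed

lemma continuous_on_rpow:
  assumes "continuous_on UNIV f" "\<And>x. f x \<ge> 0" "q \<ge> 0"
  shows "continuous_on UNIV (\<lambda>x. rpow (f x) q)"
proof (cases "q = 0")
  case True
  then have "(\<lambda>x. rpow (f x) q) = (\<lambda>x. 1)"
    by (auto simp: rpow_def fun_eq_iff)
  then show ?thesis
    by (metis continuous_on_const)
next
  case False
  then have "(\<lambda>x. rpow (f x) q) = (\<lambda>x. f x powr q)"
    by (auto simp: rpow_def fun_eq_iff)
  moreover have "continuous_on UNIV (\<lambda>x. f x powr q)"
    using assms False by (intro continuous_on_powr') (auto intro: continuous_intros)
  ultimately show ?thesis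
    by metis
qed

section \<open>Elementary inequalities\<close>

lemma Youngs_inequality_epsilon:
  fixes q e :: real
  assumes q: "q > 1" and e: "e > 0"
  obtains C where "C > 0"
    "\<And>x y. x \<ge> 0 \<Longrightarrow> y \<ge> 0 \<Longrightarrow> x * y \<le> e * x powr q + C * y powr (q / (q - 1))"
proof -
  define q' where "q' = q / (q - 1)"
  have q': "q' > 1" "1 / q + 1 / q' = 1"
    using q unfolding q'_def by (simp_all add: field_simps)
  define l where "l = (e * q) powr (1 / q)"
  have l: "l > 0" "l powr q = e * q"
    using e q unfolding l_def by (simp_all add: powr_powr)
  define C where "C = l powr (- q') / q'"
  show ?thesis
  proof (rule that)
    show "C > 0"
      using l q' unfolding C_def by simp
    fix x y :: real assume x: "x \<ge> 0" and y: "y \<ge> 0"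
    have "x * y = (l * x) * (y / l)"
      using l by simp
    also have "\<dots> \<le> (l * x) powr q / q + (y / l) powr q' / q'"
      by (rule Youngs_inequality[OF q q']) (use l x y in auto)
    also have "(l * x) powr q / q = e * x powr q"
      using l x q by (simp add: powr_mult)
    also have "(y / l) powr q' / q' = C * y powr q'"
      using l y unfolding C_def by (simp add: powr_divide powr_minus_divide)
    finally show "x * y \<le> e * x powr q + C * y powr (q / (q - 1))"
      unfolding q'_def .
  qed
qed

lemma Youngs_inequality_weighted:
  fixes q e :: real
  assumes q: "q > 1" and e: "e > 0"
  obtains C where "C > 0"
    "\<And>G x y. G > 0 \<Longrightarrow> x \<ge> 0 \<Longrightarrow> y \<ge> 0 \<Longrightarrow>
      x * y \<le> e * (G * x powr q) + C * ((1 / G) powr (1 / (q - 1)) * y powr (q / (q - 1)))"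
proof -
  obtain C where C: "C > 0"
    "\<And>x y. x \<ge> 0 \<Longrightarrow> y \<ge> 0 \<Longrightarrow> x * y \<le> e * x powr q + C * y powr (q / (q - 1))"
    using Youngs_inequality_epsilon[OF q e] by blast
  show ?thesis
  proof (rule that[OF C(1)])
    fix G x y :: real assume G: "G > 0" and x: "x \<ge> 0" and y: "y \<ge> 0"
    have "x * y = (G powr (1 / q) * x) * ((1 / G) powr (1 / q) * y)"
      using G by (simp add: powr_divide)
    also have "\<dots> \<le> e * (G powr (1 / q) * x) powr q + C * ((1 / G) powr (1 / q) * y) powr (q / (q - 1))"
      using C(2) x y by simp
    also have "(G powr (1 / q) * x) powr q = G * x powr q"
      using G x q by (simp add: powr_mult powr_powr)
    also have "((1 / G) powr (1 / q) * y) powr (q / (q - 1))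
        = (1 / G) powr (1 / (q - 1)) * y powr (q / (q - 1))"
      using G y q by (simp add: powr_mult powr_powr)
    finally show "x * y \<le> e * (G * x powr q) + C * ((1 / G) powr (1 / (q - 1)) * y powr (q / (q - 1)))" .
  qed
qed

lemma rpow_nonneg: "rpow a b \<ge> 0"
  unfolding rpow_def by simp

lemma rpow_mult_self:
  assumes "a \<ge> 0" "p \<ge> 2"
  shows "rpow a (p - 2) * a = a powr (p - 1)"
proof (cases "p = 2 \<or> a = 0")
  case True
  then show ?thesis
    using assms by (auto simp: rpow_def)
next
  case False
  have "a powr (p - 2) * a = a powr (p - 1)"
    using powr_add[of a "p - 2" 1] assms by simp
  then show ?thesis
    using False by (simp add: rpow_def)
qed

lemma rpow_mult_square:
  assumes "a \<ge> 0" "p \<ge> 2"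
  shows "rpow a (p - 2) * a\<^sup>2 = a powr p"
proof (cases "p = 2 \<or> a = 0")
  case True
  then show ?thesis
    using assms by (auto simp: rpow_def powr_numeral)
next
  case False
  then have "a powr (p - 2) * a powr 2 = a powr p"
    by (simp flip: powr_add)
  then show ?thesis
    using assms False by (simp add: rpow_def powr_numeral)
qed

text \<open>Multiplying the stability inequality by \<open>2\<alpha> + 1\<close> and inserting the weak identity eliminates
  the gradient energy \<open>I\<close>.\<close>
lemma reaction_le_cross_terms:
  fixes \<alpha> p M A G I J K E1 E2 :: real
  assumes \<alpha>: "\<alpha> > 0" and p: "p \<ge> 2"
    and A: "A = (p - 1) * (\<alpha> + 1)\<^sup>2 * (4 * \<alpha> + 1)"
    and G: "G = 2 * \<alpha> + 1 - (p - 1) * \<alpha>\<^sup>2 * M"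
    and weak: "(2 * \<alpha> + 1) * I = E1 + 2 * (\<alpha> + 1) * J"
    and stab: "E2 \<le> (p - 1) * (\<alpha>\<^sup>2 * I - 2 * (\<alpha> + 1) * \<alpha> * J + (\<alpha> + 1)\<^sup>2 * K)"
    and E1: "E1 \<le> M * E2" and K: "K \<ge> 0"
  shows "G * E2 \<le> A * (\<bar>J\<bar> + K)"
proof -
  define D where "D = 2 * \<alpha> + 1"
  have D: "D > 0"
    using \<alpha> unfolding D_def by simp
  have "A = 2 * (p - 1) * \<alpha> * (\<alpha> + 1)\<^sup>2 + (p - 1) * D * (\<alpha> + 1)\<^sup>2"
    unfolding A D_def by (simp add: algebra_simps power2_eq_square)
  moreover have "0 \<le> 2 * (p - 1) * \<alpha> * (\<alpha> + 1)\<^sup>2" "0 \<le> (p - 1) * D * (\<alpha> + 1)\<^sup>2"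
    using \<alpha> p D by simp_all
  ultimately have A_ge: "2 * (p - 1) * \<alpha> * (\<alpha> + 1)\<^sup>2 \<le> A" "(p - 1) * D * (\<alpha> + 1)\<^sup>2 \<le> A"
    by linarith+
  have "D * E2 \<le> D * ((p - 1) * (\<alpha>\<^sup>2 * I - 2 * (\<alpha> + 1) * \<alpha> * J + (\<alpha> + 1)\<^sup>2 * K))"
    using stab D by (simp add: mult_left_mono)
  also have "\<dots> = (p - 1) * \<alpha>\<^sup>2 * (D * I) - 2 * (p - 1) * \<alpha> * (\<alpha> + 1) * D * J
      + (p - 1) * D * (\<alpha> + 1)\<^sup>2 * K"
    by (simp add: algebra_simps)
  also have "(p - 1) * \<alpha>\<^sup>2 * (D * I) = (p - 1) * \<alpha>\<^sup>2 * (E1 + 2 * (\<alpha> + 1) * J)"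
    using weak unfolding D_def by simp
  finally have "D * E2 \<le> (p - 1) * \<alpha>\<^sup>2 * E1 - 2 * (p - 1) * \<alpha> * (\<alpha> + 1)\<^sup>2 * J
      + (p - 1) * D * (\<alpha> + 1)\<^sup>2 * K"
    unfolding D_def by (simp add: algebra_simps power2_eq_square)
  moreover have "(p - 1) * \<alpha>\<^sup>2 * E1 \<le> (p - 1) * \<alpha>\<^sup>2 * (M * E2)"
    using E1 p by (intro mult_left_mono) auto
  moreover have "- (2 * (p - 1) * \<alpha> * (\<alpha> + 1)\<^sup>2 * J) \<le> A * \<bar>J\<bar>"
    using mult_right_mono[OF A_ge(1), of "\<bar>J\<bar>"] \<alpha> p
    by (smt (verit) abs_ge_minus_self mult_left_mono mult_minus_right zero_le_power2 mult_nonneg_nonneg)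
  moreover have "(p - 1) * D * (\<alpha> + 1)\<^sup>2 * K \<le> A * K"
    using A_ge(2) K by (rule mult_right_mono)
  ultimately show ?thesis
    unfolding G D_def[symmetric] by (simp add: algebra_simps)
qed

lemma absorb_cross_terms:
  fixes \<alpha> p M e C1 C2 A G I J K T E1 E2 :: real
  assumes \<alpha>: "\<alpha> > 0" and p: "p \<ge> 2"
    and A: "A = (p - 1) * (\<alpha> + 1)\<^sup>2 * (4 * \<alpha> + 1)"
    and G: "G = 2 * \<alpha> + 1 - (p - 1) * \<alpha>\<^sup>2 * M"
    and weak: "(2 * \<alpha> + 1) * I = E1 + 2 * (\<alpha> + 1) * J"
    and stab: "E2 \<le> (p - 1) * (\<alpha>\<^sup>2 * I - 2 * (\<alpha> + 1) * \<alpha> * J + (\<alpha> + 1)\<^sup>2 * K)"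
    and E1: "E1 \<le> M * E2"
    and nonneg: "I \<ge> 0" "K \<ge> 0" "E2 \<ge> 0" "T \<ge> 0" "C1 \<ge> 0"
    and J_bound: "\<bar>J\<bar> \<le> e * I + C1 * T" and K_bound: "K \<le> e * I + C2 * T"
    and e: "e \<ge> 0" "4 * (\<alpha> + 1) * e \<le> 2 * \<alpha> + 1" "8 * A * M * e \<le> G * (2 * \<alpha> + 1)"
  shows "G * E2 \<le> 2 * A * (3 * C1 + C2) * T"
proof -
  define D where "D = 2 * \<alpha> + 1"
  have D: "D > 0"
    using \<alpha> unfolding D_def by simp
  have A_nonneg: "A \<ge> 0"
    using \<alpha> p unfolding A by simp
  have "G * E2 \<le> A * (\<bar>J\<bar> + K)"
    by (rule reaction_le_cross_terms[OF \<alpha> p A G weak stab E1 nonneg(2)])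
  also have "\<dots> \<le> A * (2 * e * I + (C1 + C2) * T)"
    using J_bound K_bound A_nonneg by (intro mult_left_mono) (auto simp: algebra_simps)
  finally have GE2: "G * E2 \<le> 2 * A * e * I + A * (C1 + C2) * T"
    by (simp add: algebra_simps)
  have "D * I \<le> M * E2 + 2 * (\<alpha> + 1) * (e * I + C1 * T)"
    using weak E1 J_bound \<alpha> unfolding D_def by (smt (verit) abs_ge_self mult_left_mono)
  moreover have "2 * (\<alpha> + 1) * e * I \<le> D / 2 * I"
    using e(2) nonneg(1) unfolding D_def by (intro mult_right_mono) (auto simp: algebra_simps)
  ultimately have DI: "D * I \<le> 2 * M * E2 + 4 * (\<alpha> + 1) * C1 * T"
    by (simp add: algebra_simps)
  have "D * (G * E2) \<le> 2 * A * e * (D * I) + D * A * (C1 + C2) * T"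
    using mult_left_mono[OF GE2, of D] D by (simp add: algebra_simps)
  also have "\<dots> \<le> 2 * A * e * (2 * M * E2 + 4 * (\<alpha> + 1) * C1 * T) + D * A * (C1 + C2) * T"
    using DI A_nonneg e(1) by (simp add: mult_left_mono)
  also have "\<dots> = (4 * A * M * e) * E2 + 2 * A * C1 * T * (4 * (\<alpha> + 1) * e) + D * A * (C1 + C2) * T"
    by (simp add: algebra_simps)
  also have "(4 * A * M * e) * E2 \<le> (G * D / 2) * E2"
    using e(3) nonneg(3) unfolding D_def by (intro mult_right_mono) auto
  also have "2 * A * C1 * T * (4 * (\<alpha> + 1) * e) \<le> 2 * A * C1 * T * D"
    using e(2) A_nonneg nonneg unfolding D_def by (intro mult_left_mono) auto
  finally have "D * (G * E2) \<le> D * (2 * A * (3 * C1 + C2) * T)"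
    by (simp add: algebra_simps)
  then show ?thesis
    using D by (simp only: mult_le_cancel_left_pos)
qed

lemma exists_absorption_parameter:
  fixes \<alpha> A G M :: real
  assumes "\<alpha> > 0" "A > 0" "G > 0" "M > 0"
  obtains e where "e > 0" "4 * (\<alpha> + 1) * e \<le> 2 * \<alpha> + 1" "8 * A * M * e \<le> G * (2 * \<alpha> + 1)"
proof
  define e where "e = min ((2 * \<alpha> + 1) / (4 * (\<alpha> + 1))) (G * (2 * \<alpha> + 1) / (8 * A * M))"
  show "e > 0"
    using assms unfolding e_def by simp
  have "e \<le> (2 * \<alpha> + 1) / (4 * (\<alpha> + 1))" "e \<le> G * (2 * \<alpha> + 1) / (8 * A * M)"
    unfolding e_def by simp_all
  then show "4 * (\<alpha> + 1) * e \<le> 2 * \<alpha> + 1" "8 * A * M * e \<le> G * (2 * \<alpha> + 1)"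
    using assms by (simp_all add: pos_le_divide_eq mult.commute)
qed

lemma young_cross_term:
  fixes p e b :: real
  assumes p: "p \<ge> 2" and e: "e > 0"
  obtains C where "C > 0"
    "\<And>a z d s. a \<ge> 0 \<Longrightarrow> z \<ge> 0 \<Longrightarrow> d \<ge> 0 \<Longrightarrow> \<bar>s\<bar> \<le> a * d \<Longrightarrow>
      \<bar>rpow a (p - 2) * z powr (2 * b + p - 1) * s\<bar>
        \<le> e * (rpow a (p - 2) * a\<^sup>2 * z powr (2 * b + p)) + C * (z powr (2 * b) * d powr p)"
proof -
  define q where "q = p / (p - 1)"
  have q: "q > 1" "q / (q - 1) = p" "(p - 1) * q = p"
    using p unfolding q_def by (simp_all add: field_simps)
  obtain C where C: "C > 0"
    "\<And>x y. x \<ge> 0 \<Longrightarrow> y \<ge> 0 \<Longrightarrow> x * y \<le> e * x powr q + C * y powr (q / (q - 1))"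
    using Youngs_inequality_epsilon[OF q(1) e] by blast
  show ?thesis
  proof (rule that[OF C(1)])
    fix a z d s :: real
    assume a: "a \<ge> 0" and z: "z \<ge> 0" and d: "d \<ge> 0" and s: "\<bar>s\<bar> \<le> a * d"
    have "\<bar>rpow a (p - 2) * z powr (2 * b + p - 1) * s\<bar> = rpow a (p - 2) * z powr (2 * b + p - 1) * \<bar>s\<bar>"
      using rpow_nonneg[of a "p - 2"] by (simp add: abs_mult)
    also have "\<dots> \<le> rpow a (p - 2) * z powr (2 * b + p - 1) * (a * d)"
      using rpow_nonneg[of a "p - 2"] s by (intro mult_left_mono) auto
    also have "\<dots> = (rpow a (p - 2) * a) * (z powr (p - 1) * z powr (2 * b)) * d"
      by (simp add: powr_add[symmetric] algebra_simps)
    also have "\<dots> = ((a * z) powr (p - 1) * d) * z powr (2 * b)"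
      using rpow_mult_self[OF a p] a z by (simp add: powr_mult)
    also have "\<dots> \<le> (e * ((a * z) powr (p - 1)) powr q + C * d powr (q / (q - 1))) * z powr (2 * b)"
      using C(2)[of "(a * z) powr (p - 1)" d] d by (intro mult_right_mono) auto
    also have "\<dots> = e * ((a * z) powr p * z powr (2 * b)) + C * (z powr (2 * b) * d powr p)"
      using q by (simp add: powr_powr algebra_simps)
    also have "(a * z) powr p * z powr (2 * b) = rpow a (p - 2) * a\<^sup>2 * z powr (2 * b + p)"
      using rpow_mult_square[OF a p] a z by (simp add: powr_mult powr_add algebra_simps)
    finally show "\<bar>rpow a (p - 2) * z powr (2 * b + p - 1) * s\<bar>
        \<le> e * (rpow a (p - 2) * a\<^sup>2 * z powr (2 * b + p)) + C * (z powr (2 * b) * d powr p)" .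
  qed
qed

lemma young_cutoff_term:
  fixes p e b :: real
  assumes p: "p \<ge> 2" and e: "e > 0"
  obtains C where "C > 0"
    "\<And>a z d. a \<ge> 0 \<Longrightarrow> z \<ge> 0 \<Longrightarrow> d \<ge> 0 \<Longrightarrow>
      rpow a (p - 2) * z powr (2 * b + p - 2) * d\<^sup>2
        \<le> e * (rpow a (p - 2) * a\<^sup>2 * z powr (2 * b + p)) + C * (z powr (2 * b) * d powr p)"
proof (cases "p = 2")
  case True
  show ?thesis
  proof (rule that[of 1])
    fix a z d :: real assume a: "a \<ge> 0" and z: "z \<ge> 0" and d: "d \<ge> 0"
    have "0 \<le> e * (a\<^sup>2 * z powr (2 * b + 2))"
      using e by simp
    then show "rpow a (p - 2) * z powr (2 * b + p - 2) * d\<^sup>2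
        \<le> e * (rpow a (p - 2) * a\<^sup>2 * z powr (2 * b + p)) + 1 * (z powr (2 * b) * d powr p)"
      using True d by (simp add: rpow_def powr_numeral)
  qed simp
next
  case False
  then have p2: "p > 2"
    using p by simp
  define q where "q = p / (p - 2)"
  have q: "q > 1" "2 * (q / (q - 1)) = p" "(p - 2) * q = p"
    using p2 unfolding q_def by (simp_all add: field_simps)
  obtain C where C: "C > 0"
    "\<And>x y. x \<ge> 0 \<Longrightarrow> y \<ge> 0 \<Longrightarrow> x * y \<le> e * x powr q + C * y powr (q / (q - 1))"
    using Youngs_inequality_epsilon[OF q(1) e] by blast
  show ?thesis
  proof (rule that[OF C(1)])
    fix a z d :: real
    assume a: "a \<ge> 0" and z: "z \<ge> 0" and d: "d \<ge> 0"
    define X where "X = a * z"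
    have "rpow a (p - 2) * z powr (2 * b + p - 2) * d\<^sup>2
        = (a powr (p - 2) * z powr (p - 2)) * d\<^sup>2 * z powr (2 * b)"
      using p2 by (simp add: rpow_def powr_add[symmetric] algebra_simps)
    also have "\<dots> = (X powr (p - 2) * d\<^sup>2) * z powr (2 * b)"
      using a z unfolding X_def by (simp add: powr_mult)
    also have "\<dots> \<le> (e * (X powr (p - 2)) powr q + C * (d\<^sup>2) powr (q / (q - 1))) * z powr (2 * b)"
      using C(2)[of "X powr (p - 2)" "d\<^sup>2"] by (intro mult_right_mono) auto
    also have "(d\<^sup>2) powr (q / (q - 1)) = d powr p"
    proof -
      have "d\<^sup>2 = d powr 2"
        using d by (simp add: powr_numeral)
      then have "(d\<^sup>2) powr (q / (q - 1)) = d powr (2 * (q / (q - 1)))"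
        by (simp only: powr_powr)
      then show ?thesis
        using q(2) by simp
    qed
    also have "(X powr (p - 2)) powr q = X powr p"
      using q(3) by (simp add: powr_powr)
    also have "(e * X powr p + C * d powr p) * z powr (2 * b)
        = e * (X powr p * z powr (2 * b)) + C * (z powr (2 * b) * d powr p)"
      by (simp add: algebra_simps)
    also have "X powr p * z powr (2 * b) = rpow a (p - 2) * a\<^sup>2 * z powr (2 * b + p)"
      using rpow_mult_square[OF a p] a z unfolding X_def by (simp add: powr_mult powr_add algebra_simps)
    finally show "rpow a (p - 2) * z powr (2 * b + p - 2) * d\<^sup>2
        \<le> e * (rpow a (p - 2) * a\<^sup>2 * z powr (2 * b + p)) + C * (z powr (2 * b) * d powr p)" .
  qed
qed

lemma young_cutoff_gradient:
  fixes \<beta> p q e C3 m G W z d :: real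
  assumes \<beta>: "\<beta> > 0" and p: "p > 0" and q: "q = (2 * \<beta> + p) / (2 * \<beta>)"
    and young: "\<And>G x y. G > 0 \<Longrightarrow> x \<ge> 0 \<Longrightarrow> y \<ge> 0 \<Longrightarrow>
      x * y \<le> e * (G * x powr q) + C3 * ((1 / G) powr (1 / (q - 1)) * y powr (q / (q - 1)))"
    and C3: "C3 \<ge> 0" and G: "G > 0" "1 / G \<le> m" and nonneg: "W \<ge> 0" "z \<ge> 0"
  shows "W * (z powr (2 * \<beta>) * d powr p)
    \<le> e * (G * z powr (2 * \<beta> + p))
      + C3 * max m 1 powr (1 / (q - 1)) * (W powr ((2 * \<beta> + p) / p) * d powr (p * ((2 * \<beta> + p) / p)))"
proof -
  have q': "q / (q - 1) = (2 * \<beta> + p) / p" "2 * \<beta> * q = 2 * \<beta> + p" "q > 1"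
    using \<beta> p unfolding q by (simp_all add: field_simps)
  have "1 / G \<le> max m 1"
    using G(2) by (rule max.coboundedI1)
  then have "(1 / G) powr (1 / (q - 1)) \<le> max m 1 powr (1 / (q - 1))"
    using G(1) q'(3) by (intro powr_mono2) auto
  then have "C3 * ((1 / G) powr (1 / (q - 1)) * (W * d powr p) powr (q / (q - 1)))
      \<le> C3 * (max m 1 powr (1 / (q - 1)) * (W * d powr p) powr (q / (q - 1)))"
    using C3 by (intro mult_left_mono mult_right_mono) auto
  moreover have "(z powr (2 * \<beta>)) powr q = z powr (2 * \<beta> + p)"
    using q'(2) by (simp add: powr_powr)
  moreover have "(W * d powr p) powr (q / (q - 1)) = W powr ((2 * \<beta> + p) / p) * d powr (p * ((2 * \<beta> + p) / p))"
    using nonneg q'(1) by (simp add: powr_mult powr_powr)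
  ultimately show ?thesis
    using young[OF G(1), of "z powr (2 * \<beta>)" "W * d powr p"] nonneg
    by (simp add: algebra_simps)
qed

lemma below_quadratic_root:
  fixes M \<beta> :: real
  assumes M: "M > 0" and \<beta>: "0 < \<beta>" "\<beta> < 1 / M + sqrt (1 / M + 1 / M\<^sup>2)"
  shows "M * \<beta>\<^sup>2 < 2 * \<beta> + 1"
proof -
  define t where "t = 1 / M"
  have t: "t > 0" "M * t = 1"
    using M unfolding t_def by simp_all
  define s where "s = sqrt (t + t\<^sup>2)"
  have s: "s\<^sup>2 = t + t\<^sup>2" "s \<ge> 0"
    using t unfolding s_def by simp_all
  have "t < s"
    using s t by (smt (verit) power_mono zero_less_power2)
  moreover have "\<beta> - t < s"
    using \<beta> unfolding s_def t_def by (simp add: power_one_over)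
  ultimately have "\<bar>\<beta> - t\<bar>\<^sup>2 < s\<^sup>2"
    using \<beta> s by (intro power_strict_mono) auto
  then have "\<beta>\<^sup>2 < t * (2 * \<beta> + 1)"
    using s by (simp add: power2_eq_square algebra_simps)
  then have "M * \<beta>\<^sup>2 < M * t * (2 * \<beta> + 1)"
    using M by simp
  then show ?thesis
    using t by simp
qed

lemma below_hyperbola:
  fixes M p \<alpha> :: real
  assumes M: "M > 0" and p: "p > 1" and \<alpha>: "\<alpha> > 0" and lt: "\<alpha> + 1 / 2 < 2 / (M * (p - 1))"
  shows "(p - 1) * \<alpha>\<^sup>2 * M < 2 * \<alpha> + 1"
proof -
  have "(M * (p - 1)) * (\<alpha> + 1 / 2) < 2"
    using lt M p by (simp add: pos_less_divide_eq mult.commute)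
  moreover have "(M * (p - 1)) * (2 * \<alpha> + 1) = 2 * ((M * (p - 1)) * (\<alpha> + 1 / 2))"
    by (simp add: field_simps)
  ultimately have "(M * (p - 1)) * (2 * \<alpha> + 1) < 4"
    by linarith
  then have "\<alpha>\<^sup>2 * ((M * (p - 1)) * (2 * \<alpha> + 1)) < \<alpha>\<^sup>2 * 4"
    using \<alpha> by (intro mult_strict_left_mono) auto
  then have "(p - 1) * \<alpha>\<^sup>2 * M * (2 * \<alpha> + 1) < \<alpha>\<^sup>2 * 4"
    by (simp add: algebra_simps)
  also have "\<dots> \<le> (2 * \<alpha> + 1) * (2 * \<alpha> + 1)"
    using \<alpha> by (simp add: power2_eq_square algebra_simps)
  finally show ?thesis
    using \<alpha> by (meson mult_less_cancel_right_pos add_pos_pos zero_less_one mult_pos_pos zero_less_numeral)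
qed

lemma below_t_p_imp_coercive:
  fixes p M \<beta> :: real
  assumes p: "p \<ge> 2" and M: "M > 0" and \<beta>: "0 < \<beta>" "\<beta> < t_p p M"
  shows "(p - 1) * (\<beta> + (p - 2) / 2)\<^sup>2 * M < 2 * (\<beta> + (p - 2) / 2) + 1"
proof (cases "p = 2")
  case True
  then show ?thesis
    using below_quadratic_root[OF M \<beta>(1)] \<beta>(2) unfolding t_p_def by (simp add: mult.commute)
next
  case False
  have "\<beta> + (p - 2) / 2 + 1 / 2 < 2 / (M * (p - 1))"
    using \<beta> False unfolding t_p_def by (simp add: field_simps)
  moreover have "\<beta> + (p - 2) / 2 > 0"
    using \<beta>(1) p by (simp add: add_pos_nonneg)
  ultimately show ?thesis
    using below_hyperbola[OF M, of p "\<beta> + (p - 2) / 2"] p by simp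
qed

section \<open>Stability and absorption in integral form\<close>

lemma deriv_fnl:
  assumes "t > 0"
  shows "deriv fnl t = exp (1 / t) / t\<^sup>2"
proof (rule DERIV_imp_deriv)
  show "(fnl has_real_derivative exp (1 / t) / t\<^sup>2) (at t)"
    unfolding fnl_def[abs_def] using assms
    by (auto intro!: derivative_eq_intros simp: field_simps power2_eq_square)
qed

lemma norm_scaleR_add_squared:
  fixes X Y :: "'a::real_inner"
  shows "(norm (c1 *\<^sub>R X + c2 *\<^sub>R Y))\<^sup>2 = c1\<^sup>2 * (norm X)\<^sup>2 + 2 * c1 * c2 * (X \<bullet> Y) + c2\<^sup>2 * (norm Y)\<^sup>2"
  by (simp only: power2_norm_eq_inner)
    (simp add: inner_add_left inner_add_right inner_commute[of Y X] algebra_simps power2_eq_square)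

lemma stability_middle_integrand_le:
  fixes X Y :: "'a::real_inner"
  assumes w: "w \<ge> 0"
  shows "(if X = 0 then 0 else w * norm X powr (p - 4) * (X \<bullet> Y)\<^sup>2) \<le> w * rpow (norm X) (p - 2) * (norm Y)\<^sup>2"
proof (cases "X = 0")
  case True
  then show ?thesis
    using w rpow_nonneg[of "norm X" "p - 2"] by simp
next
  case False
  have "(X \<bullet> Y)\<^sup>2 \<le> (norm X * norm Y)\<^sup>2"
    using Cauchy_Schwarz_ineq2 by (metis abs_ge_zero power2_abs power_mono)
  then have "w * norm X powr (p - 4) * (X \<bullet> Y)\<^sup>2 \<le> w * norm X powr (p - 4) * (norm X * norm Y)\<^sup>2"
    using w by (intro mult_left_mono) auto
  also have "\<dots> = w * (norm X powr (p - 4) * norm X powr 2) * (norm Y)\<^sup>2"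
    by (simp add: powr_numeral power_mult_distrib algebra_simps)
  also have "norm X powr (p - 4) * norm X powr 2 = rpow (norm X) (p - 2)"
    using powr_add[of "norm X" "p - 4" 2, symmetric] False by (simp add: rpow_def)
  finally show ?thesis
    using False by simp
qed

lemma stable_imp_reaction_le:
  fixes w g u :: "'a::euclidean_space \<Rightarrow> real" and Du D\<phi> :: "'a \<Rightarrow> 'a"
  assumes stable: "stable p w g u Du" and p: "p \<ge> 2" and w: "AE x in lebesgue. w x > 0"
    and \<phi>: "C1c_grad \<phi> D\<phi>"
    and int: "integrable lebesgue (\<lambda>x. w x * rpow (norm (Du x)) (p - 2) * (norm (D\<phi> x))\<^sup>2)"
  shows "(\<integral>x. g x * deriv fnl (u x) * (\<phi> x)\<^sup>2 \<partial>lebesgue)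
    \<le> (p - 1) * (\<integral>x. w x * rpow (norm (Du x)) (p - 2) * (norm (D\<phi> x))\<^sup>2 \<partial>lebesgue)"
proof -
  define Q where "Q = (\<integral>x. w x * rpow (norm (Du x)) (p - 2) * (norm (D\<phi> x))\<^sup>2 \<partial>lebesgue)"
  define mid where "mid = (\<lambda>x. if Du x = 0 then 0 else w x * norm (Du x) powr (p - 4) * (Du x \<bullet> D\<phi> x)\<^sup>2)"
  have mid_le: "AE x in lebesgue. mid x \<le> w x * rpow (norm (Du x)) (p - 2) * (norm (D\<phi> x))\<^sup>2"
    using w by eventually_elim (simp add: mid_def stability_middle_integrand_le)
  have Q_nonneg: "Q \<ge> 0"
    unfolding Q_def by (rule integral_nonneg_AE) (use w in \<open>eventually_elim, simp add: rpow_nonneg\<close>)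
  have "(\<integral>x. mid x \<partial>lebesgue) \<le> Q"
  proof (cases "integrable lebesgue mid")
    case True
    then show ?thesis
      unfolding Q_def using int mid_le by (rule integral_mono_AE)
  next
    case False
    then show ?thesis
      using Q_nonneg by (simp add: not_integrable_integral_eq)
  qed
  moreover have "Q + (p - 2) * (\<integral>x. mid x \<partial>lebesgue) - (\<integral>x. g x * deriv fnl (u x) * (\<phi> x)\<^sup>2 \<partial>lebesgue) \<ge> 0"
    using stable \<phi> unfolding stable_def Q_def mid_def by blast
  moreover have "(p - 2) * (\<integral>x. mid x \<partial>lebesgue) \<le> (p - 2) * Q"
    using calculation(1) p by (intro mult_left_mono) auto
  ultimately show ?thesis
    unfolding Q_def[symmetric] by (simp add: algebra_simps)
qed

lemma nn_integral_absorb: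
  fixes L T R :: "'a \<Rightarrow> real"
  assumes L: "integrable M L" "AE x in M. L x \<ge> 0"
    and T: "integrable M T" "AE x in M. T x \<ge> 0"
    and R: "R \<in> borel_measurable M" "\<And>x. R x \<ge> 0"
    and C: "C > 0" "C' > 0"
    and L_le_T: "integral\<^sup>L M L \<le> C * integral\<^sup>L M T"
    and T_le: "AE x in M. T x \<le> L x / (2 * C) + C' * R x"
  shows "(\<integral>\<^sup>+x. L x \<partial>M) \<le> ennreal (2 * C * C') * (\<integral>\<^sup>+x. R x \<partial>M)"
proof (cases "(\<integral>\<^sup>+x. R x \<partial>M)")
  case top
  then show ?thesis
    using C by (simp add: ennreal_mult_top)
next
  case (real r)
  have IL_nonneg: "integral\<^sup>L M L \<ge> 0"
    using L(2) by (rule integral_nonneg_AE)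
  have nn_L: "(\<integral>\<^sup>+x. L x \<partial>M) = ennreal (integral\<^sup>L M L)"
    using L by (rule nn_integral_eq_integral)
  have "ennreal (integral\<^sup>L M T) = (\<integral>\<^sup>+x. T x \<partial>M)"
    using T by (rule nn_integral_eq_integral[symmetric])
  also have "\<dots> \<le> (\<integral>\<^sup>+x. ennreal (1 / (2 * C)) * L x + ennreal C' * R x \<partial>M)"
  proof (rule nn_integral_mono_AE)
    show "AE x in M. ennreal (T x) \<le> ennreal (1 / (2 * C)) * L x + ennreal C' * R x"
      using T_le L(2)
    proof eventually_elim
      case (elim x)
      then have "ennreal (T x) \<le> ennreal (1 / (2 * C) * L x + C' * R x)"
        by (intro ennreal_leI) auto
      also have "\<dots> = ennreal (1 / (2 * C)) * L x + ennreal C' * R x"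
        using elim C R(2)[of x]
        by (simp add: ennreal_mult[symmetric] ennreal_plus[symmetric] del: ennreal_plus)
      finally show ?case .
    qed
  qed
  also have "\<dots> = ennreal (1 / (2 * C)) * (\<integral>\<^sup>+x. L x \<partial>M) + ennreal C' * (\<integral>\<^sup>+x. R x \<partial>M)"
    using borel_measurable_integrable[OF L(1)] R(1) by (simp add: nn_integral_add nn_integral_cmult)
  also have "\<dots> = ennreal (1 / (2 * C) * integral\<^sup>L M L + C' * r)"
    using nn_L real C IL_nonneg
    by (simp add: ennreal_mult[symmetric] ennreal_plus[symmetric] del: ennreal_plus)
  finally have "integral\<^sup>L M T \<le> 1 / (2 * C) * integral\<^sup>L M L + C' * r"
    using C IL_nonneg real by (subst (asm) ennreal_le_iff) auto
  then have "integral\<^sup>L M L \<le> C * (1 / (2 * C) * integral\<^sup>L M L + C' * r)"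
    using L_le_T C by (smt (verit) mult_left_mono)
  then have "integral\<^sup>L M L \<le> 2 * C * C' * r"
    using C by (simp add: field_simps)
  then show ?thesis
    using nn_L real C by (simp add: ennreal_mult[symmetric] ennreal_leI)
qed

section \<open>Stable solutions tested with powers of \<open>\<psi>/u\<close>\<close>

locale stable_solution =
  fixes p M :: real and w g u :: "'a::euclidean_space \<Rightarrow> real" and Du :: "'a \<Rightarrow> 'a"
  assumes p_ge_2: "p \<ge> 2"
    and loc_integrable_w: "loc_integrable w" and loc_integrable_g: "loc_integrable g"
    and w_pos: "AE x in lebesgue. w x > 0" and g_pos: "AE x in lebesgue. g x > 0"
    and C1_u: "C1_grad u Du" and u_pos: "\<And>x. u x > 0" and u_le_M: "\<And>x. u x \<le> M"
    and weak: "weak_solution p w g u Du" and stable: "stable p w g u Du"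

locale stable_solution_cutoff = stable_solution p M w g u Du
    for p M :: real and w g u :: "'a::euclidean_space \<Rightarrow> real" and Du :: "'a \<Rightarrow> 'a" +
  fixes \<psi> :: "'a \<Rightarrow> real" and D\<psi> :: "'a \<Rightarrow> 'a"
  assumes C1c_psi: "C1c_grad \<psi> D\<psi>" and psi_nonneg: "\<And>x. \<psi> x \<ge> 0"
begin

definition ratio :: "'a \<Rightarrow> real" where
  "ratio x = \<psi> x / u x"

definition grad_energy :: "real \<Rightarrow> real" where
  "grad_energy r = (\<integral>x. w x * (rpow (norm (Du x)) (p - 2) * (norm (Du x))\<^sup>2 * ratio x powr r) \<partial>lebesgue)"

definition cross_energy :: "real \<Rightarrow> real" where
  "cross_energy r = (\<integral>x. w x * (rpow (norm (Du x)) (p - 2) * ratio x powr (r - 1) * (Du x \<bullet> D\<psi> x)) \<partial>lebesgue)"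

definition cutoff_energy :: "real \<Rightarrow> real" where
  "cutoff_energy r = (\<integral>x. w x * (rpow (norm (Du x)) (p - 2) * ratio x powr (r - 2) * (norm (D\<psi> x))\<^sup>2) \<partial>lebesgue)"

definition cutoff_gradient_term :: "real \<Rightarrow> real" where
  "cutoff_gradient_term s = (\<integral>x. w x * (ratio x powr s * norm (D\<psi> x) powr p) \<partial>lebesgue)"

definition reaction :: "real \<Rightarrow> real" where
  "reaction r = (\<integral>x. g x * (exp (1 / u x) * ratio x powr r) \<partial>lebesgue)"

definition reaction_u :: "real \<Rightarrow> real" where
  "reaction_u r = (\<integral>x. g x * (exp (1 / u x) * u x * ratio x powr r) \<partial>lebesgue)"

lemma C1_psi: "C1_grad \<psi> D\<psi>"
  using C1c_psi unfolding C1c_grad_def by blast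

lemma ratio_nonneg: "ratio x \<ge> 0"
  using psi_nonneg[of x] u_pos[of x] by (simp add: ratio_def)

lemma ratio_vanishes: "\<psi> x = 0 \<Longrightarrow> ratio x = 0"
  by (simp add: ratio_def)

lemma continuous_on_ratio_powr: "c > 0 \<Longrightarrow> continuous_on UNIV (\<lambda>x. ratio x powr c)"
proof (rule continuous_on_powr'[OF _ continuous_on_const])
  show "continuous_on UNIV ratio"
    unfolding ratio_def[abs_def]
    using C1_grad_continuous_on[OF C1_u] C1_grad_continuous_on[OF C1_psi] u_pos
    by (intro continuous_on_divide) (auto, metis less_irrefl)
qed (use ratio_nonneg in auto)

lemma continuous_on_Du: "continuous_on UNIV Du"
  using C1_u unfolding C1_grad_def by blast

lemma continuous_on_Dpsi: "continuous_on UNIV D\<psi>"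
  using C1_psi unfolding C1_grad_def by blast

lemma continuous_on_rpow_Du: "continuous_on UNIV (\<lambda>x. rpow (norm (Du x)) (p - 2))"
  by (rule continuous_on_rpow[OF continuous_on_norm[OF continuous_on_Du]]) (use p_ge_2 in auto)

lemma integrable_mult_vanishing:
  assumes "loc_integrable f" "continuous_on UNIV h" "\<And>x. \<psi> x = 0 \<Longrightarrow> h x = 0"
  shows "integrable lebesgue (\<lambda>x. f x * h x)"
proof (rule loc_integrable_mult_compact_support[OF assms(1) _ assms(2)])
  show "compact (closure {x. \<psi> x \<noteq> 0})"
    using C1c_psi unfolding C1c_grad_def by blast
  show "x \<notin> closure {x. \<psi> x \<noteq> 0} \<Longrightarrow> h x = 0" for x
    using assms(3) by (meson closure_subset mem_Collect_eq subsetD)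
qed

lemma ratio_powr_mult_ratio: "ratio x powr (s - 1) * ratio x = ratio x powr s"
  using powr_add[of "ratio x" "s - 1" 1] ratio_nonneg[of x] by simp

text \<open>The gradient \<open>(1 - s) (\<psi>/u)^s \<nabla>u + s (\<psi>/u)^(s-1) \<nabla>\<psi>\<close> of the test function \<open>u (\<psi>/u)^s\<close>
  no longer involves the gradient of the quotient.\<close>
lemma C1c_grad_test_function:
  assumes s: "s > 1"
  shows "C1c_grad (\<lambda>x. u x * ratio x powr s)
    (\<lambda>x. ((1 - s) * ratio x powr s) *\<^sub>R Du x + (s * ratio x powr (s - 1)) *\<^sub>R D\<psi> x)"
  unfolding C1c_grad_def
proof
  define Dz where "Dz = (\<lambda>x. (1 / u x) *\<^sub>R D\<psi> x - (\<psi> x / (u x)\<^sup>2) *\<^sub>R Du x)"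
  have "C1_grad ratio Dz"
    unfolding ratio_def[abs_def] Dz_def by (rule C1_grad_divide[OF C1_psi C1_u u_pos])
  from C1_grad_mult[OF C1_u C1_grad_powr[OF this ratio_nonneg s]]
  have C1: "C1_grad (\<lambda>x. u x * ratio x powr s)
      (\<lambda>x. u x *\<^sub>R ((s * ratio x powr (s - 1)) *\<^sub>R Dz x) + ratio x powr s *\<^sub>R Du x)" .
  have "u x *\<^sub>R ((s * ratio x powr (s - 1)) *\<^sub>R Dz x) + ratio x powr s *\<^sub>R Du x
      = ((1 - s) * ratio x powr s) *\<^sub>R Du x + (s * ratio x powr (s - 1)) *\<^sub>R D\<psi> x" for x
  proof -
    have "u x *\<^sub>R Dz x = D\<psi> x - ratio x *\<^sub>R Du x"
      using u_pos[of x] unfolding Dz_def ratio_def by (simp add: scaleR_diff_right power2_eq_square)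
    then have "u x *\<^sub>R ((s * ratio x powr (s - 1)) *\<^sub>R Dz x)
        = (s * ratio x powr (s - 1)) *\<^sub>R (D\<psi> x - ratio x *\<^sub>R Du x)"
      by (metis scaleR_left_commute)
    then have "u x *\<^sub>R ((s * ratio x powr (s - 1)) *\<^sub>R Dz x)
        = (s * ratio x powr (s - 1)) *\<^sub>R D\<psi> x - (s * (ratio x powr (s - 1) * ratio x)) *\<^sub>R Du x"
      by (simp add: scaleR_diff_right)
    then show ?thesis
      using ratio_powr_mult_ratio[of x s] by (simp add: algebra_simps)
  qed
  then show "C1_grad (\<lambda>x. u x * ratio x powr s)
      (\<lambda>x. ((1 - s) * ratio x powr s) *\<^sub>R Du x + (s * ratio x powr (s - 1)) *\<^sub>R D\<psi> x)"
    using C1 by presburger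
  have "compact (closure {x. \<psi> x \<noteq> 0})"
    using C1c_psi unfolding C1c_grad_def by blast
  then show "compact (closure {x. u x * ratio x powr s \<noteq> 0})"
    by (rule compact_support_mono) (simp add: ratio_vanishes)
qed

lemma integrable_grad_energy:
  "r > 0 \<Longrightarrow> integrable lebesgue (\<lambda>x. w x * (rpow (norm (Du x)) (p - 2) * (norm (Du x))\<^sup>2 * ratio x powr r))"
  by (rule integrable_mult_vanishing[OF loc_integrable_w])
    (intro continuous_on_mult continuous_on_power continuous_on_norm continuous_on_rpow_Du
      continuous_on_ratio_powr continuous_on_Du, simp_all add: ratio_vanishes)

lemma integrable_cross_energy:
  "r > 1 \<Longrightarrow> integrable lebesgue (\<lambda>x. w x * (rpow (norm (Du x)) (p - 2) * ratio x powr (r - 1) * (Du x \<bullet> D\<psi> x)))"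
  by (rule integrable_mult_vanishing[OF loc_integrable_w])
    (intro continuous_on_mult continuous_on_inner continuous_on_rpow_Du
      continuous_on_ratio_powr continuous_on_Du continuous_on_Dpsi, simp_all add: ratio_vanishes)

lemma integrable_cutoff_energy:
  "r > 2 \<Longrightarrow> integrable lebesgue (\<lambda>x. w x * (rpow (norm (Du x)) (p - 2) * ratio x powr (r - 2) * (norm (D\<psi> x))\<^sup>2))"
  by (rule integrable_mult_vanishing[OF loc_integrable_w])
    (intro continuous_on_mult continuous_on_power continuous_on_norm continuous_on_rpow_Du
      continuous_on_ratio_powr continuous_on_Dpsi, simp_all add: ratio_vanishes)

lemma continuous_on_norm_Dpsi_powr: "continuous_on UNIV (\<lambda>x. norm (D\<psi> x) powr p)"
  using p_ge_2
  by (intro continuous_on_powr' continuous_on_norm continuous_on_Dpsi continuous_on_const) auto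

lemma integrable_cutoff_gradient_term:
  "s > 0 \<Longrightarrow> integrable lebesgue (\<lambda>x. w x * (ratio x powr s * norm (D\<psi> x) powr p))"
  by (rule integrable_mult_vanishing[OF loc_integrable_w])
    (intro continuous_on_mult continuous_on_ratio_powr continuous_on_norm_Dpsi_powr,
      simp_all add: ratio_vanishes)

lemma continuous_on_exp_inverse_u: "continuous_on UNIV (\<lambda>x. exp (1 / u x))"
  using C1_grad_continuous_on[OF C1_u] u_pos
  by (intro continuous_on_exp continuous_on_divide continuous_on_const) (auto, metis less_irrefl)

lemma integrable_reaction:
  "r > 0 \<Longrightarrow> integrable lebesgue (\<lambda>x. g x * (exp (1 / u x) * ratio x powr r))"
  by (rule integrable_mult_vanishing[OF loc_integrable_g])
    (intro continuous_on_mult continuous_on_exp_inverse_u continuous_on_ratio_powr,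
      simp_all add: ratio_vanishes)

lemma integrable_reaction_u:
  "r > 0 \<Longrightarrow> integrable lebesgue (\<lambda>x. g x * (exp (1 / u x) * u x * ratio x powr r))"
  by (rule integrable_mult_vanishing[OF loc_integrable_g])
    (intro continuous_on_mult continuous_on_exp_inverse_u continuous_on_ratio_powr
      C1_grad_continuous_on[OF C1_u], simp_all add: ratio_vanishes)

lemma integrable_ratio_powr:
  "r > 0 \<Longrightarrow> integrable lebesgue (\<lambda>x. g x * ratio x powr r)"
  by (rule integrable_mult_vanishing[OF loc_integrable_g])
    (intro continuous_on_ratio_powr, simp_all add: ratio_vanishes)


lemma weak_identity:
  assumes r: "r > 1"
  shows "(r - 1) * grad_energy r = reaction_u r + r * cross_energy r"
proof -
  have "(\<integral>x. w x * rpow (norm (Du x)) (p - 2)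
        * (Du x \<bullet> (((1 - r) * ratio x powr r) *\<^sub>R Du x + (r * ratio x powr (r - 1)) *\<^sub>R D\<psi> x)) \<partial>lebesgue)
      = (\<integral>x. g x * fnl (u x) * (u x * ratio x powr r) \<partial>lebesgue)"
    using weak C1c_grad_test_function[OF r] unfolding weak_solution_def by blast
  also have "\<dots> = - reaction_u r"
    unfolding reaction_u_def fnl_def by (simp add: algebra_simps)
  also have "(\<integral>x. w x * rpow (norm (Du x)) (p - 2)
        * (Du x \<bullet> (((1 - r) * ratio x powr r) *\<^sub>R Du x + (r * ratio x powr (r - 1)) *\<^sub>R D\<psi> x)) \<partial>lebesgue)
      = (\<integral>x. (1 - r) * (w x * (rpow (norm (Du x)) (p - 2) * (norm (Du x))\<^sup>2 * ratio x powr r))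
          + r * (w x * (rpow (norm (Du x)) (p - 2) * ratio x powr (r - 1) * (Du x \<bullet> D\<psi> x))) \<partial>lebesgue)"
    by (rule Bochner_Integration.integral_cong) (simp_all add: inner_add_right power2_norm_eq_inner algebra_simps)
  also have "\<dots> = (1 - r) * grad_energy r + r * cross_energy r"
    using integrable_grad_energy[of r] integrable_cross_energy[OF r] r
    unfolding grad_energy_def cross_energy_def by simp
  finally show ?thesis
    by (simp add: algebra_simps)
qed

lemma norm_test_gradient_squared:
  "(norm (((1 - k) * ratio x powr k) *\<^sub>R Du x + (k * ratio x powr (k - 1)) *\<^sub>R D\<psi> x))\<^sup>2
    = (k - 1)\<^sup>2 * (ratio x powr (2 * k) * (norm (Du x))\<^sup>2)
      - 2 * k * (k - 1) * (ratio x powr (2 * k - 1) * (Du x \<bullet> D\<psi> x))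
      + k\<^sup>2 * (ratio x powr (2 * k - 2) * (norm (D\<psi> x))\<^sup>2)"
proof -
  have "ratio x powr (2 * k) = ratio x powr k * ratio x powr k"
    "ratio x powr (2 * k - 1) = ratio x powr k * ratio x powr (k - 1)"
    "ratio x powr (2 * k - 2) = ratio x powr (k - 1) * ratio x powr (k - 1)"
    by (simp_all flip: powr_add)
  then show ?thesis
    unfolding norm_scaleR_add_squared by (simp add: power2_eq_square algebra_simps)
qed

lemma stability_inequality:
  assumes k: "k > 1"
  shows "reaction (2 * k) \<le> (p - 1) * ((k - 1)\<^sup>2 * grad_energy (2 * k)
    - 2 * k * (k - 1) * cross_energy (2 * k) + k\<^sup>2 * cutoff_energy (2 * k))"
proof -
  define D\<phi> where "D\<phi> x = ((1 - k) * ratio x powr k) *\<^sub>R Du x + (k * ratio x powr (k - 1)) *\<^sub>R D\<psi> x" for x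
  have \<phi>: "C1c_grad (\<lambda>x. u x * ratio x powr k) D\<phi>"
    unfolding D\<phi>_def[abs_def] by (rule C1c_grad_test_function[OF k])
  have norm_D\<phi>: "(norm (D\<phi> x))\<^sup>2 = (k - 1)\<^sup>2 * (ratio x powr (2 * k) * (norm (Du x))\<^sup>2)
      - 2 * k * (k - 1) * (ratio x powr (2 * k - 1) * (Du x \<bullet> D\<psi> x))
      + k\<^sup>2 * (ratio x powr (2 * k - 2) * (norm (D\<psi> x))\<^sup>2)" for x
    unfolding D\<phi>_def by (rule norm_test_gradient_squared)
  have "integrable lebesgue (\<lambda>x. w x * (rpow (norm (Du x)) (p - 2) * (norm (D\<phi> x))\<^sup>2))"
  proof (rule integrable_mult_vanishing[OF loc_integrable_w])
    show "continuous_on UNIV (\<lambda>x. rpow (norm (Du x)) (p - 2) * (norm (D\<phi> x))\<^sup>2)"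
      using \<phi> unfolding C1c_grad_def C1_grad_def
      by (intro continuous_on_mult continuous_on_power continuous_on_norm continuous_on_rpow_Du) auto
    show "\<psi> x = 0 \<Longrightarrow> rpow (norm (Du x)) (p - 2) * (norm (D\<phi> x))\<^sup>2 = 0" for x
      by (simp add: D\<phi>_def ratio_vanishes)
  qed
  then have "(\<integral>x. g x * deriv fnl (u x) * (u x * ratio x powr k)\<^sup>2 \<partial>lebesgue)
      \<le> (p - 1) * (\<integral>x. w x * rpow (norm (Du x)) (p - 2) * (norm (D\<phi> x))\<^sup>2 \<partial>lebesgue)"
    by (intro stable_imp_reaction_le[OF stable p_ge_2 w_pos \<phi>]) (simp add: mult.assoc)
  also have "(\<integral>x. g x * deriv fnl (u x) * (u x * ratio x powr k)\<^sup>2 \<partial>lebesgue) = reaction (2 * k)"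
    unfolding reaction_def
  proof (rule Bochner_Integration.integral_cong)
    fix x
    have "ratio x powr (2 * k) = ratio x powr k * ratio x powr k"
      by (simp flip: powr_add)
    then show "g x * deriv fnl (u x) * (u x * ratio x powr k)\<^sup>2 = g x * (exp (1 / u x) * ratio x powr (2 * k))"
      using u_pos[of x] by (simp add: deriv_fnl power2_eq_square field_simps)
  qed simp
  also have "(\<integral>x. w x * rpow (norm (Du x)) (p - 2) * (norm (D\<phi> x))\<^sup>2 \<partial>lebesgue)
      = (\<integral>x. (k - 1)\<^sup>2 * (w x * (rpow (norm (Du x)) (p - 2) * (norm (Du x))\<^sup>2 * ratio x powr (2 * k)))
        - 2 * k * (k - 1) * (w x * (rpow (norm (Du x)) (p - 2) * ratio x powr (2 * k - 1) * (Du x \<bullet> D\<psi> x)))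
        + k\<^sup>2 * (w x * (rpow (norm (Du x)) (p - 2) * ratio x powr (2 * k - 2) * (norm (D\<psi> x))\<^sup>2)) \<partial>lebesgue)"
    by (rule Bochner_Integration.integral_cong) (simp_all add: norm_D\<phi> algebra_simps)
  also have "\<dots> = (k - 1)\<^sup>2 * grad_energy (2 * k) - 2 * k * (k - 1) * cross_energy (2 * k)
      + k\<^sup>2 * cutoff_energy (2 * k)"
    using integrable_grad_energy[of "2 * k"] integrable_cross_energy[of "2 * k"]
      integrable_cutoff_energy[of "2 * k"] k
    unfolding grad_energy_def cross_energy_def cutoff_energy_def by simp
  finally show ?thesis .
qed


lemma grad_energy_nonneg: "grad_energy r \<ge> 0"
  unfolding grad_energy_def
  by (rule integral_nonneg_AE) (use w_pos in \<open>eventually_elim, simp add: rpow_nonneg\<close>)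

lemma cutoff_energy_nonneg: "cutoff_energy r \<ge> 0"
  unfolding cutoff_energy_def
  by (rule integral_nonneg_AE) (use w_pos in \<open>eventually_elim, simp add: rpow_nonneg\<close>)

lemma cutoff_gradient_term_nonneg: "cutoff_gradient_term s \<ge> 0"
  unfolding cutoff_gradient_term_def
  by (rule integral_nonneg_AE) (use w_pos in \<open>eventually_elim, simp\<close>)

lemma reaction_nonneg: "reaction r \<ge> 0"
  unfolding reaction_def
  by (rule integral_nonneg_AE) (use g_pos in \<open>eventually_elim, simp\<close>)

lemma reaction_u_le: "r > 0 \<Longrightarrow> reaction_u r \<le> M * reaction r"
  unfolding reaction_u_def reaction_def integral_mult_right_zero[symmetric]
proof (rule integral_mono_AE[OF integrable_reaction_u])
  show "r > 0 \<Longrightarrow> integrable lebesgue (\<lambda>x. M * (g x * (exp (1 / u x) * ratio x powr r)))"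
    using integrable_reaction by simp
  show "AE x in lebesgue. g x * (exp (1 / u x) * u x * ratio x powr r)
      \<le> M * (g x * (exp (1 / u x) * ratio x powr r))"
    using g_pos
  proof eventually_elim
    case (elim x)
    have "g x * exp (1 / u x) * ratio x powr r * u x \<le> g x * exp (1 / u x) * ratio x powr r * M"
      using elim u_le_M[of x] by (intro mult_left_mono) auto
    then show ?case
      by (simp add: algebra_simps)
  qed
qed

lemma ratio_integral_le_reaction:
  "r > 0 \<Longrightarrow> (\<integral>x. g x * ratio x powr r \<partial>lebesgue) \<le> reaction r"
  unfolding reaction_def
proof (rule integral_mono_AE[OF integrable_ratio_powr integrable_reaction])
  show "AE x in lebesgue. g x * ratio x powr r \<le> g x * (exp (1 / u x) * ratio x powr r)"
    using g_pos
  proof eventually_elim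
    case (elim x)
    have "1 * ratio x powr r \<le> exp (1 / u x) * ratio x powr r"
      using u_pos[of x] by (intro mult_right_mono) auto
    then show ?case
      using elim by (intro mult_left_mono) auto
  qed
qed

lemma cross_energy_bound:
  assumes b: "b > 0"
    and young: "\<And>a z d s. a \<ge> 0 \<Longrightarrow> z \<ge> 0 \<Longrightarrow> d \<ge> 0 \<Longrightarrow> \<bar>s\<bar> \<le> a * d \<Longrightarrow>
      \<bar>rpow a (p - 2) * z powr (2 * b + p - 1) * s\<bar>
        \<le> e * (rpow a (p - 2) * a\<^sup>2 * z powr (2 * b + p)) + C * (z powr (2 * b) * d powr p)"
  shows "\<bar>cross_energy (2 * b + p)\<bar> \<le> e * grad_energy (2 * b + p) + C * cutoff_gradient_term (2 * b)"
proof -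
  have r: "2 * b + p > 1" "2 * b + p > 0" "2 * b > 0"
    using b p_ge_2 by auto
  note int = integrable_cross_energy[OF r(1)] integrable_grad_energy[OF r(2)]
    integrable_cutoff_gradient_term[OF r(3)]
  have "\<bar>cross_energy (2 * b + p)\<bar>
      \<le> (\<integral>x. \<bar>w x * (rpow (norm (Du x)) (p - 2) * ratio x powr (2 * b + p - 1) * (Du x \<bullet> D\<psi> x))\<bar> \<partial>lebesgue)"
    unfolding cross_energy_def by (rule integral_abs_bound)
  also have "\<dots> \<le> (\<integral>x. e * (w x * (rpow (norm (Du x)) (p - 2) * (norm (Du x))\<^sup>2 * ratio x powr (2 * b + p)))
      + C * (w x * (ratio x powr (2 * b) * norm (D\<psi> x) powr p)) \<partial>lebesgue)"
  proof (rule integral_mono_AE)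
    show "AE x in lebesgue. \<bar>w x * (rpow (norm (Du x)) (p - 2) * ratio x powr (2 * b + p - 1) * (Du x \<bullet> D\<psi> x))\<bar>
        \<le> e * (w x * (rpow (norm (Du x)) (p - 2) * (norm (Du x))\<^sup>2 * ratio x powr (2 * b + p)))
          + C * (w x * (ratio x powr (2 * b) * norm (D\<psi> x) powr p))"
      using w_pos
    proof eventually_elim
      case (elim x)
      have "w x * \<bar>rpow (norm (Du x)) (p - 2) * ratio x powr (2 * b + p - 1) * (Du x \<bullet> D\<psi> x)\<bar>
          \<le> w x * (e * (rpow (norm (Du x)) (p - 2) * (norm (Du x))\<^sup>2 * ratio x powr (2 * b + p))
            + C * (ratio x powr (2 * b) * norm (D\<psi> x) powr p))"
        using young[OF norm_ge_zero ratio_nonneg norm_ge_zero Cauchy_Schwarz_ineq2] elim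
        by (intro mult_left_mono) auto
      then show ?case
        using elim by (simp add: abs_mult algebra_simps)
    qed
  qed (use int in simp_all)
  also have "\<dots> = e * grad_energy (2 * b + p) + C * cutoff_gradient_term (2 * b)"
    using int unfolding grad_energy_def cutoff_gradient_term_def by simp
  finally show ?thesis .
qed

lemma cutoff_energy_bound:
  assumes b: "b > 0"
    and young: "\<And>a z d. a \<ge> 0 \<Longrightarrow> z \<ge> 0 \<Longrightarrow> d \<ge> 0 \<Longrightarrow>
      rpow a (p - 2) * z powr (2 * b + p - 2) * d\<^sup>2
        \<le> e * (rpow a (p - 2) * a\<^sup>2 * z powr (2 * b + p)) + C * (z powr (2 * b) * d powr p)"
  shows "cutoff_energy (2 * b + p) \<le> e * grad_energy (2 * b + p) + C * cutoff_gradient_term (2 * b)"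
proof -
  have r: "2 * b + p > 2" "2 * b + p > 0" "2 * b > 0"
    using b p_ge_2 by auto
  note int = integrable_cutoff_energy[OF r(1)] integrable_grad_energy[OF r(2)]
    integrable_cutoff_gradient_term[OF r(3)]
  have "cutoff_energy (2 * b + p)
      \<le> (\<integral>x. e * (w x * (rpow (norm (Du x)) (p - 2) * (norm (Du x))\<^sup>2 * ratio x powr (2 * b + p)))
      + C * (w x * (ratio x powr (2 * b) * norm (D\<psi> x) powr p)) \<partial>lebesgue)"
    unfolding cutoff_energy_def
  proof (rule integral_mono_AE)
    show "AE x in lebesgue. w x * (rpow (norm (Du x)) (p - 2) * ratio x powr (2 * b + p - 2) * (norm (D\<psi> x))\<^sup>2)
        \<le> e * (w x * (rpow (norm (Du x)) (p - 2) * (norm (Du x))\<^sup>2 * ratio x powr (2 * b + p)))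
          + C * (w x * (ratio x powr (2 * b) * norm (D\<psi> x) powr p))"
      using w_pos
    proof eventually_elim
      case (elim x)
      have "w x * (rpow (norm (Du x)) (p - 2) * ratio x powr (2 * b + p - 2) * (norm (D\<psi> x))\<^sup>2)
          \<le> w x * (e * (rpow (norm (Du x)) (p - 2) * (norm (Du x))\<^sup>2 * ratio x powr (2 * b + p))
            + C * (ratio x powr (2 * b) * norm (D\<psi> x) powr p))"
        using young[OF norm_ge_zero ratio_nonneg norm_ge_zero] elim by (intro mult_left_mono) auto
      then show ?case
        by (simp add: algebra_simps)
    qed
  qed (use int in simp_all)
  also have "\<dots> = e * grad_energy (2 * b + p) + C * cutoff_gradient_term (2 * b)"
    using int unfolding grad_energy_def cutoff_gradient_term_def by simp
  finally show ?thesis .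
qed


lemma ratio_integral_estimate:
  fixes b e C1 C2 A G :: real
  defines "\<alpha> \<equiv> b + (p - 2) / 2"
  assumes b: "b > 0"
    and A: "A = (p - 1) * (\<alpha> + 1)\<^sup>2 * (4 * \<alpha> + 1)"
    and G: "G = 2 * \<alpha> + 1 - (p - 1) * \<alpha>\<^sup>2 * M" "G > 0"
    and e: "e > 0" "4 * (\<alpha> + 1) * e \<le> 2 * \<alpha> + 1" "8 * A * M * e \<le> G * (2 * \<alpha> + 1)"
    and C1: "C1 \<ge> 0"
    and young_cross: "\<And>a z d s. a \<ge> 0 \<Longrightarrow> z \<ge> 0 \<Longrightarrow> d \<ge> 0 \<Longrightarrow> \<bar>s\<bar> \<le> a * d \<Longrightarrow>
      \<bar>rpow a (p - 2) * z powr (2 * b + p - 1) * s\<bar>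
        \<le> e * (rpow a (p - 2) * a\<^sup>2 * z powr (2 * b + p)) + C1 * (z powr (2 * b) * d powr p)"
    and young_cutoff: "\<And>a z d. a \<ge> 0 \<Longrightarrow> z \<ge> 0 \<Longrightarrow> d \<ge> 0 \<Longrightarrow>
      rpow a (p - 2) * z powr (2 * b + p - 2) * d\<^sup>2
        \<le> e * (rpow a (p - 2) * a\<^sup>2 * z powr (2 * b + p)) + C2 * (z powr (2 * b) * d powr p)"
  shows "G * (\<integral>x. g x * ratio x powr (2 * b + p) \<partial>lebesgue)
    \<le> 2 * A * (3 * C1 + C2) * cutoff_gradient_term (2 * b)"
proof -
  have \<alpha>: "\<alpha> > 0"
    using b p_ge_2 unfolding \<alpha>_def by (simp add: add_pos_nonneg)
  have r: "2 * (\<alpha> + 1) = 2 * b + p" "2 * b + p > 1" "2 * \<alpha> + 1 = 2 * b + p - 1"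
    using b p_ge_2 unfolding \<alpha>_def by (simp_all add: field_simps)
  have weak': "(2 * \<alpha> + 1) * grad_energy (2 * b + p)
      = reaction_u (2 * b + p) + 2 * (\<alpha> + 1) * cross_energy (2 * b + p)"
    unfolding r(1,3) using r(2) by (rule weak_identity)
  have stab': "reaction (2 * b + p) \<le> (p - 1) * (\<alpha>\<^sup>2 * grad_energy (2 * b + p)
      - 2 * (\<alpha> + 1) * \<alpha> * cross_energy (2 * b + p) + (\<alpha> + 1)\<^sup>2 * cutoff_energy (2 * b + p))"
    unfolding r(1)[symmetric] using stability_inequality[of "\<alpha> + 1"] \<alpha> by simp
  have "G * reaction (2 * b + p) \<le> 2 * A * (3 * C1 + C2) * cutoff_gradient_term (2 * b)"
    using \<alpha> p_ge_2 A G(1) weak' stab' reaction_u_le grad_energy_nonneg cutoff_energy_nonneg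
      reaction_nonneg cutoff_gradient_term_nonneg C1 cross_energy_bound[OF b young_cross]
      cutoff_energy_bound[OF b young_cutoff] e r(2)
    by (intro absorb_cross_terms[of \<alpha> p]) auto
  moreover have "G * (\<integral>x. g x * ratio x powr (2 * b + p) \<partial>lebesgue) \<le> G * reaction (2 * b + p)"
    using ratio_integral_le_reaction r(2) G(2) by (intro mult_left_mono) auto
  ultimately show ?thesis
    by linarith
qed

lemma nn_integral_ratio_bound:
  fixes \<beta> C C3 q m :: real
  assumes \<beta>: "\<beta> > 0" and q: "q = (2 * \<beta> + p) / (2 * \<beta>)"
    and C: "C > 0" "C3 > 0"
    and ratio_bound: "(\<integral>x. g x * (\<psi> x / u x) powr (2 * \<beta> + p) \<partial>lebesgue)
      \<le> C * (\<integral>x. w x * ((\<psi> x / u x) powr (2 * \<beta>) * norm (D\<psi> x) powr p) \<partial>lebesgue)"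
    and young: "\<And>G x y. G > 0 \<Longrightarrow> x \<ge> 0 \<Longrightarrow> y \<ge> 0 \<Longrightarrow>
      x * y \<le> 1 / (2 * C) * (G * x powr q) + C3 * ((1 / G) powr (1 / (q - 1)) * y powr (q / (q - 1)))"
    and m: "esssup lebesgue (\<lambda>x. ereal \<bar>1 / g x\<bar>) = ereal m"
  shows "(\<integral>\<^sup>+x. ennreal (g x * (\<psi> x / u x) powr (2 * \<beta> + p)) \<partial>lebesgue)
    \<le> ennreal (2 * C * (C3 * max m 1 powr (1 / (q - 1))))
      * (\<integral>\<^sup>+x. ennreal (w x powr ((2 * \<beta> + p) / p) * norm (D\<psi> x) powr (p * ((2 * \<beta> + p) / p))) \<partial>lebesgue)"
proof -
  have r: "2 * \<beta> + p > 0" "2 * \<beta> > 0"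
    using \<beta> p_ge_2 by auto
  have "AE x in lebesgue. ereal \<bar>1 / g x\<bar> \<le> ereal m"
    using esssup_AE[of "\<lambda>x. ereal \<bar>1 / g x\<bar>" lebesgue] m by simp
  then have g_bound: "AE x in lebesgue. 1 / g x \<le> m"
    using g_pos by eventually_elim simp
  have "(\<integral>\<^sup>+x. ennreal (g x * ratio x powr (2 * \<beta> + p)) \<partial>lebesgue)
      \<le> ennreal (2 * C * (C3 * max m 1 powr (1 / (q - 1))))
        * (\<integral>\<^sup>+x. ennreal (w x powr ((2 * \<beta> + p) / p) * norm (D\<psi> x) powr (p * ((2 * \<beta> + p) / p))) \<partial>lebesgue)"
  proof (rule nn_integral_absorb)
    show "integrable lebesgue (\<lambda>x. g x * ratio x powr (2 * \<beta> + p))"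
      using r(1) by (rule integrable_ratio_powr)
    show "integrable lebesgue (\<lambda>x. w x * (ratio x powr (2 * \<beta>) * norm (D\<psi> x) powr p))"
      using r(2) by (rule integrable_cutoff_gradient_term)
    show "AE x in lebesgue. 0 \<le> g x * ratio x powr (2 * \<beta> + p)"
      using g_pos by eventually_elim simp
    show "AE x in lebesgue. 0 \<le> w x * (ratio x powr (2 * \<beta>) * norm (D\<psi> x) powr p)"
      using w_pos by eventually_elim simp
    show "(\<lambda>x. w x powr ((2 * \<beta> + p) / p) * norm (D\<psi> x) powr (p * ((2 * \<beta> + p) / p)))
        \<in> borel_measurable lebesgue"
      using loc_integrable_imp_borel_measurable[OF loc_integrable_w]
        continuous_on_imp_borel_measurable_lebesgue[OF continuous_on_Dpsi]
      by measurable
    show "integral\<^sup>L lebesgue (\<lambda>x. g x * ratio x powr (2 * \<beta> + p))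
        \<le> C * integral\<^sup>L lebesgue (\<lambda>x. w x * (ratio x powr (2 * \<beta>) * norm (D\<psi> x) powr p))"
      using ratio_bound unfolding ratio_def .
    show "AE x in lebesgue. w x * (ratio x powr (2 * \<beta>) * norm (D\<psi> x) powr p)
        \<le> g x * ratio x powr (2 * \<beta> + p) / (2 * C) + C3 * max m 1 powr (1 / (q - 1))
          * (w x powr ((2 * \<beta> + p) / p) * norm (D\<psi> x) powr (p * ((2 * \<beta> + p) / p)))"
      using w_pos g_pos g_bound
    proof eventually_elim
      case (elim x)
      show ?case
        using young_cutoff_gradient[OF \<beta> _ q young _ elim(2,3), of "w x" "ratio x" "norm (D\<psi> x)"]
          p_ge_2 C elim(1) ratio_nonneg[of x]
        by simp
    qed
  qed (use C in auto)
  then show ?thesis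
    unfolding ratio_def .
qed

end

lemma uniform_ratio_estimate:
  fixes p M b :: real
  assumes p: "p \<ge> 2" and M: "M > 0" and b: "b > 0"
    and coercive: "(p - 1) * (b + (p - 2) / 2)\<^sup>2 * M < 2 * (b + (p - 2) / 2) + 1"
  obtains C where "C > 0"
    "\<And>(w :: 'a::euclidean_space \<Rightarrow> real) g u Du \<psi> D\<psi>. stable_solution_cutoff p M w g u Du \<psi> D\<psi> \<Longrightarrow>
      (\<integral>x. g x * (\<psi> x / u x) powr (2 * b + p) \<partial>lebesgue)
        \<le> C * (\<integral>x. w x * ((\<psi> x / u x) powr (2 * b) * norm (D\<psi> x) powr p) \<partial>lebesgue)"
proof -
  define \<alpha> where "\<alpha> = b + (p - 2) / 2"
  define A where "A = (p - 1) * (\<alpha> + 1)\<^sup>2 * (4 * \<alpha> + 1)"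
  define G where "G = 2 * \<alpha> + 1 - (p - 1) * \<alpha>\<^sup>2 * M"
  have \<alpha>: "\<alpha> > 0"
    using b p unfolding \<alpha>_def by (simp add: add_pos_nonneg)
  have A: "A > 0"
    using \<alpha> p unfolding A_def by simp
  have G: "G > 0"
    using coercive unfolding G_def \<alpha>_def by simp
  obtain e where e: "e > 0" "4 * (\<alpha> + 1) * e \<le> 2 * \<alpha> + 1" "8 * A * M * e \<le> G * (2 * \<alpha> + 1)"
    using exists_absorption_parameter[OF \<alpha> A G M] .
  obtain C1 where C1: "C1 > 0" "\<And>a z d s. a \<ge> 0 \<Longrightarrow> z \<ge> 0 \<Longrightarrow> d \<ge> 0 \<Longrightarrow> \<bar>s\<bar> \<le> a * d \<Longrightarrow>
      \<bar>rpow a (p - 2) * z powr (2 * b + p - 1) * s\<bar>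
        \<le> e * (rpow a (p - 2) * a\<^sup>2 * z powr (2 * b + p)) + C1 * (z powr (2 * b) * d powr p)"
    using young_cross_term[OF p e(1)] by blast
  obtain C2 where C2: "C2 > 0" "\<And>a z d. a \<ge> 0 \<Longrightarrow> z \<ge> 0 \<Longrightarrow> d \<ge> 0 \<Longrightarrow>
      rpow a (p - 2) * z powr (2 * b + p - 2) * d\<^sup>2
        \<le> e * (rpow a (p - 2) * a\<^sup>2 * z powr (2 * b + p)) + C2 * (z powr (2 * b) * d powr p)"
    using young_cutoff_term[OF p e(1)] by blast
  show ?thesis
  proof (rule that)
    show "2 * A * (3 * C1 + C2) / G > 0"
      using A G C1 C2 by simp
    fix w g u :: "'a \<Rightarrow> real" and Du \<psi> D\<psi>
    assume "stable_solution_cutoff p M w g u Du \<psi> D\<psi>"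
    then interpret stable_solution_cutoff p M w g u Du \<psi> D\<psi> .
    have "G * (\<integral>x. g x * ratio x powr (2 * b + p) \<partial>lebesgue)
        \<le> 2 * A * (3 * C1 + C2) * cutoff_gradient_term (2 * b)"
      using b A_def G_def G e C1 C2 unfolding \<alpha>_def by (intro ratio_integral_estimate) auto
    then show "(\<integral>x. g x * (\<psi> x / u x) powr (2 * b + p) \<partial>lebesgue)
        \<le> 2 * A * (3 * C1 + C2) / G * (\<integral>x. w x * ((\<psi> x / u x) powr (2 * b) * norm (D\<psi> x) powr p) \<partial>lebesgue)"
      using G unfolding ratio_def[abs_def] cutoff_gradient_term_def by (simp add: field_simps)
  qed
qed


theorem theorem3p5:
  fixes p M m :: real
  assumes hp: "p \<ge> 2"
    and hM: "M > 0" "p > 2 \<Longrightarrow> M < 4 / (p - 1)\<^sup>2"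
  shows "\<forall>\<beta>. 0 < \<beta> \<and> \<beta> < t_p p M \<longrightarrow>
    (\<exists>c>0. \<forall>(w :: 'a::euclidean_space \<Rightarrow> real) g u Du.
       loc_integrable w \<and> loc_integrable g \<and>
       (AE x in lebesgue. w x > 0) \<and> (AE x in lebesgue. g x > 0) \<and>
       esssup lebesgue (\<lambda>x. ereal \<bar>1 / g x\<bar>) = ereal m \<and>
       C1_grad u Du \<and> (\<forall>x. u x > 0) \<and> (\<forall>x. u x \<le> M) \<and>
       weak_solution p w g u Du \<and> stable p w g u Du \<longrightarrow>
       (\<forall>\<psi> D\<psi>. C1c_grad \<psi> D\<psi> \<and> (\<forall>x. 0 \<le> \<psi> x \<and> \<psi> x \<le> 1) \<longrightarrow>
          (\<integral>\<^sup>+x. ennreal (g x * (\<psi> x / u x) powr (2 * \<beta> + p)) \<partial>lebesgue)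
          \<le> ennreal c * (\<integral>\<^sup>+x. ennreal (w x powr ((2 * \<beta> + p) / p)
                   * norm (D\<psi> x) powr (p * ((2 * \<beta> + p) / p))) \<partial>lebesgue)))"
proof (intro allI impI, goal_cases)
  case (1 \<beta>)
  note \<beta> = this
  obtain C where C: "C > 0" and ratio_bound:
    "\<And>(w :: 'a \<Rightarrow> real) g u Du \<psi> D\<psi>. stable_solution_cutoff p M w g u Du \<psi> D\<psi> \<Longrightarrow>
      (\<integral>x. g x * (\<psi> x / u x) powr (2 * \<beta> + p) \<partial>lebesgue)
        \<le> C * (\<integral>x. w x * ((\<psi> x / u x) powr (2 * \<beta>) * norm (D\<psi> x) powr p) \<partial>lebesgue)"
    using uniform_ratio_estimate[OF hp hM(1) _ below_t_p_imp_coercive[OF hp hM(1)]] \<beta> by blast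
  define q where "q = (2 * \<beta> + p) / (2 * \<beta>)"
  have "q > 1"
    using \<beta> hp unfolding q_def by (simp add: field_simps)
  then obtain C3 where C3: "C3 > 0" "\<And>G x y. G > 0 \<Longrightarrow> x \<ge> 0 \<Longrightarrow> y \<ge> 0 \<Longrightarrow>
      x * y \<le> 1 / (2 * C) * (G * x powr q) + C3 * ((1 / G) powr (1 / (q - 1)) * y powr (q / (q - 1)))"
    using Youngs_inequality_weighted[of q "1 / (2 * C)"] C by auto
  show ?case
  proof (intro exI[of _ "2 * C * (C3 * max m 1 powr (1 / (q - 1)))"] conjI allI impI, goal_cases)
    case 1
    show ?case
      using C C3 by simp
  next
    case (2 w g u Du \<psi> D\<psi>)
    then interpret stable_solution_cutoff p M w g u Du \<psi> D\<psi>
      using hp by unfold_locales auto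
    show ?case
      using 2 \<beta> q_def C C3 ratio_bound[OF stable_solution_cutoff_axioms]
      by (intro nn_integral_ratio_bound) auto
  qed
qed

end
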